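(* Let $f:\mathbb{R}^\ell\times\mathbb{R}^m\to\mathbb{R}^\ell$ be $C^1$, let $\Lambda$ be a parameter shift with limits $\lambda_\pm$, and let $X$ define a stable path with endpoints $X_\pm$. For every sufficiently small $\epsilon>0$ there exists $S>0$ such that if $r>0$ and $N>0$ satisfy $rN>S$, then there is a unique solution $\{x_n\}$ of $x_{n+1}=f(x_n,\Lambda(rn))$ that stays within an $\epsilon$-neighborhood of $X_-$ for all $n\le -N$.
   Context: A parameter shift is a $C^1$ function $\Lambda:\mathbb{R}\to\mathbb{R}^m$ with $\lim_{s\to\pm\infty}\Lambda(s)=\lambda_\pm$ and $\lim_{s\to\pm\infty}\Lambda'(s)=0$. A stable path is given by $X:\mathbb{R}\to\mathbb{R}^\ell$ such that: $X(s)$ is a fixed point of $f(\cdot,\Lambda(s))$ for every $s$; $\{(s,X(s))\}$ is a connected curve; the limits $X_\pm=\lim_{s\to\pm\infty}X(s)$ exist and are fixed points of $f(\cdot,\lambda_\pm)$; and the spectral radius of $D_xf(X(s),\Lambda(s))$ is $<1$ for all $s\in\mathbb{R}\cup\{\pm\infty\}$ (with $X(\pm\infty)=X_\pm$, $\Lambda(\pm\infty)=\lambda_\pm$). A solution is a sequence $\{x_n\}$ satisfying $x_{n+1}=f(x_n,\Lambda(rn))$; $f(\cdot,\lambda)$ need not be invertible. *)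

theory Defs
  imports "HOL-Analysis.Analysis"
begin

definition C1_map :: "('a::euclidean_space \<Rightarrow> 'b::euclidean_space) \<Rightarrow> bool" where
  "C1_map g \<longleftrightarrow> (\<exists>g' :: 'a \<Rightarrow> ('a \<Rightarrow>\<^sub>L 'b).
      (\<forall>z. (g has_derivative blinfun_apply (g' z)) (at z)) \<and> continuous_on UNIV g')"

definition parameter_shift ::
  "(real \<Rightarrow> 'm::euclidean_space) \<Rightarrow> 'm \<Rightarrow> 'm \<Rightarrow> bool" where
  "parameter_shift Lam lm lp \<longleftrightarrow> C1_map Lam \<and>
     (Lam \<longlongrightarrow> lm) at_bot \<and> (Lam \<longlongrightarrow> lp) at_top \<and>
     ((\<lambda>s. vector_derivative Lam (at s)) \<longlongrightarrow> 0) at_bot \<and>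
     ((\<lambda>s. vector_derivative Lam (at s)) \<longlongrightarrow> 0) at_top"

definition complex_eigenvalues :: "real^'n^'n \<Rightarrow> complex set" where
  "complex_eigenvalues A = {\<mu>. \<exists>v :: complex^'n. v \<noteq> 0 \<and>
      (map_matrix complex_of_real A) *v v = \<mu> *s v}"

definition spectral_radius :: "real^'n^'n \<Rightarrow> real" where
  "spectral_radius A = Max (cmod ` complex_eigenvalues A)"

definition Dx :: "((real^'l) \<times> (real^'m) \<Rightarrow> real^'l) \<Rightarrow> real^'l \<Rightarrow> real^'m \<Rightarrow> real^'l^'l" where
  "Dx f x lam = matrix (\<lambda>h. (THE D. (f has_derivative D) (at (x, lam))) (h, 0))"

definition stable_path ::
  "((real^'l) \<times> (real^'m) \<Rightarrow> real^'l) \<Rightarrow> (real \<Rightarrow> real^'m) \<Rightarrow> real^'m \<Rightarrow> real^'m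
    \<Rightarrow> (real \<Rightarrow> real^'l) \<Rightarrow> real^'l \<Rightarrow> real^'l \<Rightarrow> bool" where
  "stable_path f Lam lm lp X Xm Xp \<longleftrightarrow>
     (\<forall>s. f (X s, Lam s) = X s) \<and>
     connected (range (\<lambda>s. (s, X s))) \<and>
     (X \<longlongrightarrow> Xm) at_bot \<and> (X \<longlongrightarrow> Xp) at_top \<and>
     f (Xm, lm) = Xm \<and> f (Xp, lp) = Xp \<and>
     (\<forall>s. spectral_radius (Dx f (X s) (Lam s)) < 1) \<and>
     spectral_radius (Dx f Xm lm) < 1 \<and> spectral_radius (Dx f Xp lp) < 1"

definition is_solution ::
  "((real^'l) \<times> (real^'m) \<Rightarrow> real^'l) \<Rightarrow> (real \<Rightarrow> real^'m) \<Rightarrow> real \<Rightarrow> (int \<Rightarrow> real^'l) \<Rightarrow> bool" where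
  "is_solution f Lam r x \<longleftrightarrow> (\<forall>n::int. x (n + 1) = f (x n, Lam (r * of_int n)))"

end

theory Submission
  imports Defs "Jordan_Normal_Form.Spectral_Radius"
begin

(* Let A = D_x f(X_-, lambda_-). Since its spectral radius is below 1, the powers of A decay
   geometrically (by the Jordan normal form), so for some theta < 1 the Lyapunov norm
   nu(v) = sum_{j<k} |A^j v| / theta^j satisfies nu(A v) <= theta nu(v). By continuity of Df,
   every f(., lambda) with lambda close to lambda_- is then a q-contraction for nu near X_-,
   with q < 1. If r N is large, every parameter Lambda(r n) with n < -N is that close to
   lambda_-, so in the past the system is a sequence of uniform contractions mapping a small
   nu-ball around X_- into itself. The pullback limits x_m = lim_k f_{m-1} o ... o f_{m-k} (X_-)
   give a solution staying in the ball. For two solutions staying in the eps-ball, the nu-distance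
   at time m is at most q^k times their bounded distance at time m - k, so they coincide up to
   time -N and hence, by forward iteration, at all times. *)

(* Jordan_Normal_Form bounds the powers of a matrix of spectral radius < 1; these maps move
   vectors and matrices indexed by a finite type there, enumerating the index type by
   from_nat_into. *)

definition jnf_vec :: "'a^'n::finite \<Rightarrow> 'a Matrix.vec" where
  "jnf_vec v = Matrix.vec CARD('n) (\<lambda>i. vec_nth v (from_nat_into UNIV i))"

definition jnf_mat :: "'a^'n^'n::finite \<Rightarrow> 'a Matrix.mat" where
  "jnf_mat A = Matrix.mat CARD('n) CARD('n)
     (\<lambda>(i, j). vec_nth (vec_nth A (from_nat_into UNIV i)) (from_nat_into UNIV j))"

definition cart_vec :: "'a Matrix.vec \<Rightarrow> 'a^'n::finite" where
  "cart_vec u = (\<chi> j. vec_index u (to_nat_on UNIV j))"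

lemma jnf_vec_carrier [simp]: "jnf_vec (v :: 'a^'n::finite) \<in> carrier_vec CARD('n)"
  by (simp add: jnf_vec_def)

lemma jnf_mat_carrier [simp]: "jnf_mat (A :: 'a^'n^'n::finite) \<in> carrier_mat CARD('n) CARD('n)"
  by (simp add: jnf_mat_def)

lemma to_nat_on_UNIV_less_card [simp]:
  "to_nat_on (UNIV :: 'n::finite set) j < CARD('n)"
  using to_nat_on_finite[of "UNIV :: 'n set"] by (auto simp: bij_betw_def)

lemma cart_vec_jnf_vec [simp]: "cart_vec (jnf_vec v) = (v :: 'a^'n::finite)"
  by (simp add: cart_vec_def jnf_vec_def countable_finite Finite_Cartesian_Product.vec_eq_iff)

lemma jnf_vec_cart_vec [simp]:
  assumes "u \<in> carrier_vec CARD('n)"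
  shows "jnf_vec (cart_vec u :: 'a^'n::finite) = u"
proof -
  have "to_nat_on (UNIV :: 'n set) (from_nat_into UNIV i) = i" if "i < CARD('n)" for i
    using that to_nat_on_finite[of "UNIV :: 'n set"] by (intro to_nat_on_from_nat_into) (auto simp: bij_betw_def)
  with assms show ?thesis by (auto simp: cart_vec_def jnf_vec_def)
qed

lemma jnf_vec_0 [simp]: "jnf_vec (0 :: 'a::zero^'n::finite) = 0\<^sub>v CARD('n)"
  by (auto simp: jnf_vec_def)

lemma jnf_vec_mult: "jnf_vec (A *v v) = jnf_mat A *\<^sub>v jnf_vec (v :: 'a::comm_semiring_1^'n::finite)"
proof (rule eq_vecI)
  fix i assume "i < dim_vec (jnf_mat A *\<^sub>v jnf_vec v)"
  then have "i < CARD('n)" by (simp add: jnf_mat_def)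
  then show "vec_index (jnf_vec (A *v v)) i = vec_index (jnf_mat A *\<^sub>v jnf_vec v) i"
    using sum.card_from_nat_into[of "\<lambda>j. vec_nth (vec_nth A (from_nat_into UNIV i)) j * vec_nth v j" UNIV]
    by (simp add: jnf_vec_def jnf_mat_def matrix_vector_mult_def scalar_prod_def atLeast0LessThan)
qed (simp add: jnf_vec_def jnf_mat_def)

lemma jnf_vec_smult: "jnf_vec (c *s v) = c \<cdot>\<^sub>v jnf_vec (v :: 'a::times^'n::finite)"
  by (auto simp: jnf_vec_def)

lemma jnf_vec_funpow:
  "jnf_vec (((*v) A ^^ k) v) = jnf_mat A ^\<^sub>m k *\<^sub>v jnf_vec (v :: 'a::comm_semiring_1^'n::finite)"
proof (induction k arbitrary: v)
  case (Suc k)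
  have "jnf_vec (((*v) A ^^ Suc k) v) = jnf_mat A ^\<^sub>m k *\<^sub>v (jnf_mat A *\<^sub>v jnf_vec v)"
    by (simp only: funpow_Suc_right comp_def Suc jnf_vec_mult)
  then show ?case
    by (simp add: assoc_mult_mat_vec[OF pow_carrier_mat[OF jnf_mat_carrier] jnf_mat_carrier
        jnf_vec_carrier])
qed (simp add: jnf_mat_def)

lemma jnf_mat_map_matrix: "jnf_mat (map_matrix f A) = map_mat f (jnf_mat A)"
  by (auto simp: jnf_mat_def)

lemma eigenvalue_jnf_mat_iff:
  "eigenvalue (jnf_mat B) \<mu> \<longleftrightarrow> (\<exists>v. v \<noteq> 0 \<and> B *v v = \<mu> *s (v :: 'a::field^'n::finite))"
proof
  assume "eigenvalue (jnf_mat B) \<mu>"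
  then obtain u where u: "u \<in> carrier_vec CARD('n)" "u \<noteq> 0\<^sub>v CARD('n)" "jnf_mat B *\<^sub>v u = \<mu> \<cdot>\<^sub>v u"
    by (auto simp: eigenvalue_def eigenvector_def jnf_mat_def)
  define v :: "'a^'n" where "v = cart_vec u"
  have "jnf_vec (B *v v) = jnf_vec (\<mu> *s v)"
    using u by (simp add: v_def jnf_vec_mult jnf_vec_smult)
  then have "B *v v = \<mu> *s v"
    by (metis cart_vec_jnf_vec)
  moreover have "v \<noteq> 0"
  proof
    assume "v = 0"
    then have "u = jnf_vec (0 :: 'a^'n)"
      using jnf_vec_cart_vec[OF u(1)] by (simp add: v_def)
    with u(2) show False by simp
  qed
  ultimately show "\<exists>v. v \<noteq> 0 \<and> B *v v = \<mu> *s v" by blast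
next
  assume "\<exists>v. v \<noteq> 0 \<and> B *v v = \<mu> *s v"
  then obtain v :: "'a^'n" where v: "v \<noteq> 0" "B *v v = \<mu> *s v" by blast
  have "jnf_vec v \<noteq> 0\<^sub>v CARD('n)"
    using v(1) by (metis cart_vec_jnf_vec jnf_vec_0)
  moreover have "jnf_mat B *\<^sub>v jnf_vec v = \<mu> \<cdot>\<^sub>v jnf_vec v"
    using v(2) by (simp flip: jnf_vec_mult jnf_vec_smult)
  ultimately show "eigenvalue (jnf_mat B) \<mu>"
    by (auto simp: eigenvalue_def eigenvector_def carrier_matD(1)[OF jnf_mat_carrier]
        intro!: exI[of _ "jnf_vec v"])
qed

section \<open>Spectral radius and decay of matrix powers\<close>

lemma complex_eigenvalues_eq_spectrum:
  "complex_eigenvalues A = spectrum (jnf_mat (map_matrix complex_of_real A))"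
  by (auto simp: complex_eigenvalues_def spectrum_def eigenvalue_jnf_mat_iff)

lemma spectral_radius_eq_jnf:
  "Defs.spectral_radius A = Spectral_Radius.spectral_radius (jnf_mat (map_matrix complex_of_real A))"
  by (simp add: Defs.spectral_radius_def Spectral_Radius.spectral_radius_def
      complex_eigenvalues_eq_spectrum)

lemma finite_complex_eigenvalues: "finite (complex_eigenvalues A)"
  using card_finite_spectrum(1)[OF jnf_mat_carrier] by (simp add: complex_eigenvalues_eq_spectrum)

lemma complex_eigenvalues_nonempty: "complex_eigenvalues A \<noteq> {}"
  using spectrum_non_empty[OF jnf_mat_carrier] by (simp add: complex_eigenvalues_eq_spectrum)

lemma spectral_radius_nonneg: "0 \<le> Defs.spectral_radius A"
proof -
  obtain \<mu> where "\<mu> \<in> complex_eigenvalues A"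
    using complex_eigenvalues_nonempty by blast
  then have "cmod \<mu> \<le> Defs.spectral_radius A"
    by (simp add: Defs.spectral_radius_def finite_complex_eigenvalues)
  then show ?thesis by (meson norm_ge_zero order_trans)
qed

lemma complex_eigenvalues_scaleR_iff:
  fixes A :: "real^'n^'n::finite"
  assumes "c \<noteq> 0"
  shows "\<mu> \<in> complex_eigenvalues (c *\<^sub>R A) \<longleftrightarrow> \<mu> / of_real c \<in> complex_eigenvalues A"
proof -
  have scale: "map_matrix complex_of_real (c *\<^sub>R A) *v v = of_real c *s (map_matrix of_real A *v v)"
    for v :: "complex^'n"
    by (simp add: Finite_Cartesian_Product.vec_eq_iff matrix_vector_mult_def sum_distrib_left mult.assoc)
  have "of_real c *s w = \<mu> *s v \<longleftrightarrow> w = (\<mu> / of_real c) *s v" for v w :: "complex^'n"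
    using assms by (auto simp: Finite_Cartesian_Product.vec_eq_iff field_simps)
  then show ?thesis
    by (simp add: complex_eigenvalues_def scale)
qed

lemma spectral_radius_scaleR:
  fixes A :: "real^'n^'n::finite"
  assumes "0 < c"
  shows "Defs.spectral_radius (c *\<^sub>R A) = c * Defs.spectral_radius A"
proof -
  have "c \<noteq> 0" using assms by simp
  have "complex_eigenvalues (c *\<^sub>R A) = (\<lambda>\<mu>. of_real c * \<mu>) ` complex_eigenvalues A"
  proof (intro equalityI subsetI)
    fix \<mu> assume "\<mu> \<in> complex_eigenvalues (c *\<^sub>R A)"
    then have "\<mu> / of_real c \<in> complex_eigenvalues A"
      using complex_eigenvalues_scaleR_iff[OF \<open>c \<noteq> 0\<close>] by blast
    moreover have "\<mu> = of_real c * (\<mu> / of_real c)"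
      using \<open>c \<noteq> 0\<close> by simp
    ultimately show "\<mu> \<in> (\<lambda>\<mu>. of_real c * \<mu>) ` complex_eigenvalues A"
      by (rule rev_image_eqI)
  next
    fix \<mu> assume "\<mu> \<in> (\<lambda>\<mu>. of_real c * \<mu>) ` complex_eigenvalues A"
    with \<open>c \<noteq> 0\<close> show "\<mu> \<in> complex_eigenvalues (c *\<^sub>R A)"
      by (auto simp: complex_eigenvalues_scaleR_iff)
  qed
  then have "cmod ` complex_eigenvalues (c *\<^sub>R A) = (*) c ` cmod ` complex_eigenvalues A"
    using assms by (auto simp: image_image norm_mult)
  moreover have "mono ((*) c)"
    using assms by (auto intro: monoI mult_left_mono)
  ultimately show ?thesis
    by (simp add: Defs.spectral_radius_def mono_Max_commute finite_complex_eigenvalues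
        complex_eigenvalues_nonempty)
qed

lemma norm_le_sum_jnf_vec: "norm v \<le> (\<Sum>i<CARD('n). \<bar>vec_index (jnf_vec v) i\<bar>)"
  for v :: "real^'n::finite"
  using norm_le_l1_cart[of v] sum.card_from_nat_into[of "\<lambda>j. \<bar>vec_nth v j\<bar>" UNIV]
  by (simp add: jnf_vec_def)

lemma sum_jnf_vec_le_norm: "(\<Sum>i<CARD('n). \<bar>vec_index (jnf_vec v) i\<bar>) \<le> CARD('n) * norm v"
  for v :: "real^'n::finite"
  using sum_mono[of "{..<CARD('n)}" "\<lambda>i. \<bar>vec_index (jnf_vec v) i\<bar>" "\<lambda>_. norm v"]
  by (simp add: jnf_vec_def component_le_norm_cart)

lemma norm_bound_mult_vec:
  fixes P :: "real Matrix.mat"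
  assumes "P \<in> carrier_mat n n" "u \<in> carrier_vec n" "norm_bound P c" "i < n"
  shows "\<bar>vec_index (P *\<^sub>v u) i\<bar> \<le> c * (\<Sum>j<n. \<bar>vec_index u j\<bar>)"
proof -
  have "\<bar>vec_index (P *\<^sub>v u) i\<bar> = \<bar>\<Sum>j<n. P $$ (i, j) * vec_index u j\<bar>"
    using assms by (simp add: scalar_prod_def atLeast0LessThan)
  also have "\<dots> \<le> (\<Sum>j<n. c * \<bar>vec_index u j\<bar>)"
    using assms(1,3,4) unfolding norm_bound_def
    by (intro order_trans[OF sum_abs] sum_mono) (auto simp: abs_mult intro: mult_right_mono)
  finally show ?thesis by (simp add: sum_distrib_left)
qed

lemma bounded_powers_if_spectral_radius_less_1:
  fixes A :: "real^'n^'n::finite"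
  assumes "Defs.spectral_radius A < 1"
  shows "\<exists>K. \<forall>k x. norm (((*v) A ^^ k) x) \<le> K * norm x"
proof -
  define M where "M = jnf_mat A"
  have M: "M \<in> carrier_mat CARD('n) CARD('n)" by (simp add: M_def)
  have "Spectral_Radius.spectral_radius (map_mat complex_of_real M) < 1"
    using assms by (simp add: spectral_radius_eq_jnf jnf_mat_map_matrix M_def)
  moreover have "map_mat complex_of_real M \<in> carrier_mat CARD('n) CARD('n)"
    using M by simp
  ultimately obtain c where "norm_bound (map_mat complex_of_real M ^\<^sub>m k) c" for k
    using spectral_radius_jnf_norm_bound_less_1_upper_triangular by blast
  then have bound: "norm_bound (M ^\<^sub>m k) c" for k
    using M by (simp add: of_real_hom.mat_hom_pow[symmetric] norm_bound_def)
  have "0 < dim_row (M ^\<^sub>m 0)" "0 < dim_col (M ^\<^sub>m 0)"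
    using M by auto
  then have "norm ((M ^\<^sub>m 0) $$ (0, 0)) \<le> c"
    using bound[of 0] unfolding norm_bound_def by blast
  then have "0 \<le> c"
    by (meson norm_ge_zero order_trans)
  have "norm (((*v) A ^^ k) x) \<le> (CARD('n) * c * CARD('n)) * norm x" for k x
  proof -
    have "norm (((*v) A ^^ k) x) \<le> (\<Sum>i<CARD('n). \<bar>vec_index (M ^\<^sub>m k *\<^sub>v jnf_vec x) i\<bar>)"
      using norm_le_sum_jnf_vec[of "((*v) A ^^ k) x"] by (simp add: jnf_vec_funpow M_def)
    also have "\<dots> \<le> (\<Sum>i<CARD('n). c * (\<Sum>j<CARD('n). \<bar>vec_index (jnf_vec x) j\<bar>))"
      by (intro sum_mono norm_bound_mult_vec[OF pow_carrier_mat[OF M]] bound) auto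
    also have "\<dots> \<le> (\<Sum>i<CARD('n). c * (CARD('n) * norm x))"
      using \<open>0 \<le> c\<close> by (intro sum_mono mult_left_mono sum_jnf_vec_le_norm)
    finally show ?thesis by simp
  qed
  then show ?thesis by blast
qed

lemma funpow_scaleR_matrix: "((*v) (c *\<^sub>R B) ^^ k) x = c ^ k *\<^sub>R ((*v) B ^^ k) x"
  for B :: "real^'n^'n::finite"
  by (induction k) (auto simp: scaleR_matrix_vector_assoc[symmetric] matrix_scaleR_vector_ac)

lemma power_decay_if_spectral_radius_less:
  fixes A :: "real^'n^'n::finite"
  assumes "Defs.spectral_radius A < \<rho>"
  shows "\<exists>K. \<forall>k x. norm (((*v) A ^^ k) x) \<le> K * \<rho> ^ k * norm x"
proof -
  have "0 < \<rho>" using assms spectral_radius_nonneg[of A] by linarith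
  define B where "B = (1 / \<rho>) *\<^sub>R A"
  have "Defs.spectral_radius B < 1"
    using assms \<open>0 < \<rho>\<close> by (simp add: B_def spectral_radius_scaleR)
  then obtain K where K: "norm (((*v) B ^^ k) x) \<le> K * norm x" for k x
    using bounded_powers_if_spectral_radius_less_1 by blast
  have "norm (((*v) A ^^ k) x) = \<rho> ^ k * norm (((*v) B ^^ k) x)" for k x
    using funpow_scaleR_matrix[where c = \<rho> and B = B] \<open>0 < \<rho>\<close> by (simp add: B_def)
  also have "\<rho> ^ k * norm (((*v) B ^^ k) x) \<le> K * \<rho> ^ k * norm x" for k x
    using mult_left_mono[OF K, of "\<rho> ^ k"] \<open>0 < \<rho>\<close> by (simp add: mult_ac)
  finally show ?thesis by blast
qed

section \<open>Adapted norms\<close>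

locale norm_equivalent =
  fixes N :: "'a::real_normed_vector \<Rightarrow> real" and C :: real
  assumes triangle: "N (u + v) \<le> N u + N v"
    and norm_le: "norm v \<le> N v"
    and le_norm: "N v \<le> C * norm v"
    and C_pos: "0 < C"
begin

lemma nonneg: "0 \<le> N v"
  using norm_le[of v] norm_ge_zero[of v] by linarith

lemma triangle_diff: "N (u - w) \<le> N (u - v) + N (v - w)"
  using triangle[of "u - v" "v - w"] by simp

lemma eq_0_iff: "N v = 0 \<longleftrightarrow> v = 0"
  using norm_le[of v] le_norm[of v] nonneg[of v] by auto

lemma perturbed_bound:
  assumes "N a \<le> \<theta> * N v" "norm (w - a) \<le> \<eta> * norm v" "0 \<le> \<eta>"
  shows "N w \<le> (\<theta> + C * \<eta>) * N v"
proof -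
  have "N w \<le> N a + N (w - a)"
    using triangle[of a "w - a"] by simp
  also have "N (w - a) \<le> C * (\<eta> * norm v)"
    using le_norm[of "w - a"] assms(2) C_pos by (meson mult_left_mono less_imp_le order_trans)
  also have "C * (\<eta> * norm v) \<le> C * \<eta> * N v"
    using norm_le[of v] assms(3) C_pos by (simp add: mult_left_mono mult.assoc)
  finally show ?thesis
    using assms(1) by (simp add: algebra_simps)
qed

lemma lipschitz: "C-lipschitz_on UNIV N"
proof (rule lipschitz_onI)
  fix u v
  have "N u \<le> N v + C * norm (u - v)"
    using triangle[of v "u - v"] le_norm[of "u - v"] by simp
  moreover have "N v \<le> N u + C * norm (u - v)"
    using triangle[of u "v - u"] le_norm[of "v - u"] by (simp add: norm_minus_commute)
  ultimately show "dist (N u) (N v) \<le> C * dist u v"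
    by (simp add: dist_real_def dist_norm)
qed (use C_pos in simp)

definition cball_N :: "'a \<Rightarrow> real \<Rightarrow> 'a set" where
  "cball_N p r = {u. N (u - p) \<le> r}"

lemma closed_cball_N: "closed (cball_N p r)"
proof -
  have "continuous_on UNIV (\<lambda>u. N (u - p))"
    by (rule continuous_on_compose2[OF lipschitz_on_continuous_on[OF lipschitz]])
      (auto intro: continuous_intros)
  then show ?thesis
    unfolding cball_N_def by (rule closed_Collect_le[OF _ continuous_on_const])
qed

lemma cball_N_subset_ball:
  assumes "r < e"
  shows "cball_N p r \<subseteq> ball p e"
proof
  fix u assume "u \<in> cball_N p r"
  then have "norm (u - p) \<le> r"
    using norm_le[of "u - p"] by (simp add: cball_N_def)
  with assms show "u \<in> ball p e"
    by (simp add: dist_norm norm_minus_commute)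
qed

end

lemma funpow_linear_add:
  fixes T :: "'a::real_vector \<Rightarrow> 'a"
  assumes "linear T"
  shows "(T ^^ j) (u + v) = (T ^^ j) u + (T ^^ j) v"
  by (induction j) (simp_all add: linear_add[OF assms])

definition lyapunov_norm :: "('a::real_normed_vector \<Rightarrow> 'a) \<Rightarrow> real \<Rightarrow> nat \<Rightarrow> 'a \<Rightarrow> real" where
  "lyapunov_norm T \<theta> k v = (\<Sum>j<k. norm ((T ^^ j) v) / \<theta> ^ j)"

lemma lyapunov_norm_equivalent:
  fixes T :: "'a::real_normed_vector \<Rightarrow> 'a"
  assumes "linear T" "0 \<le> \<rho>" "0 < \<theta>" "0 < k"
    and decay: "\<And>j x. norm ((T ^^ j) x) \<le> K * \<rho> ^ j * norm x"
  shows "norm_equivalent (lyapunov_norm T \<theta> k) (1 + (\<Sum>j<k. \<bar>K\<bar> * (\<rho> / \<theta>) ^ j))"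
proof
  let ?N = "lyapunov_norm T \<theta> k"
  show "?N (u + v) \<le> ?N u + ?N v" for u v
    unfolding lyapunov_norm_def funpow_linear_add[OF assms(1)] sum.distrib[symmetric]
      add_divide_distrib[symmetric]
    using \<open>0 < \<theta>\<close> by (intro sum_mono divide_right_mono norm_triangle_ineq) auto
  show "norm v \<le> ?N v" for v
    using member_le_sum[of 0 "{..<k}" "\<lambda>j. norm ((T ^^ j) v) / \<theta> ^ j"] assms(3,4)
    by (simp add: lyapunov_norm_def)
  have "?N v \<le> (\<Sum>j<k. \<bar>K\<bar> * (\<rho> / \<theta>) ^ j) * norm v" for v
    unfolding lyapunov_norm_def sum_distrib_right
  proof (rule sum_mono)
    fix j
    have "norm ((T ^^ j) v) \<le> \<bar>K\<bar> * \<rho> ^ j * norm v"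
      using decay[of j v] \<open>0 \<le> \<rho>\<close> by (smt (verit) mult_right_mono norm_ge_zero zero_le_power)
    then show "norm ((T ^^ j) v) / \<theta> ^ j \<le> \<bar>K\<bar> * (\<rho> / \<theta>) ^ j * norm v"
      using \<open>0 < \<theta>\<close> by (simp add: field_simps power_divide)
  qed
  then show "?N v \<le> (1 + (\<Sum>j<k. \<bar>K\<bar> * (\<rho> / \<theta>) ^ j)) * norm v" for v
    by (smt (verit) mult_right_mono norm_ge_zero distrib_right)
  show "0 < 1 + (\<Sum>j<k. \<bar>K\<bar> * (\<rho> / \<theta>) ^ j)"
    using assms(2,3) by (smt (verit) sum_nonneg abs_ge_zero mult_nonneg_nonneg zero_le_power
        divide_nonneg_pos)
qed

lemma lyapunov_norm_contraction:
  assumes "0 < \<theta>" and decay: "norm ((T ^^ k) v) \<le> K * \<rho> ^ k * norm v"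
    and k: "K * (\<rho> / \<theta>) ^ k \<le> 1"
  shows "lyapunov_norm T \<theta> k (T v) \<le> \<theta> * lyapunov_norm T \<theta> k v"
proof -
  \<comment> \<open>shifting the sum by one index trades its first term for the term k, which is no larger\<close>
  define g where "g j = norm ((T ^^ j) v) / \<theta> ^ j" for j
  have "lyapunov_norm T \<theta> k (T v) = \<theta> * (\<Sum>j<k. g (Suc j))"
    using \<open>0 < \<theta>\<close> by (simp add: lyapunov_norm_def g_def sum_distrib_left funpow_swap1)
  also have "(\<Sum>j<k. g (Suc j)) = lyapunov_norm T \<theta> k v + g k - g 0"
    using sum.lessThan_Suc_shift[of g k] by (simp add: lyapunov_norm_def g_def)
  also have "g k \<le> g 0"
  proof -
    have "g k \<le> K * (\<rho> / \<theta>) ^ k * norm v"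
      using decay \<open>0 < \<theta>\<close> by (simp add: g_def field_simps power_divide)
    also have "\<dots> \<le> norm v"
      using mult_right_mono[OF k norm_ge_zero[of v]] by simp
    finally show ?thesis by (simp add: g_def)
  qed
  finally show ?thesis
    using \<open>0 < \<theta>\<close> by (simp add: mult_left_mono)
qed

lemma adapted_norm_exists:
  fixes T :: "'a::real_normed_vector \<Rightarrow> 'a"
  assumes "linear T" "0 \<le> \<rho>" "\<rho> < \<theta>"
    and decay: "\<And>k x. norm ((T ^^ k) x) \<le> K * \<rho> ^ k * norm x"
  shows "\<exists>N C. norm_equivalent N C \<and> (\<forall>v. N (T v) \<le> \<theta> * N v)"
proof -
  have "0 < \<theta>" using assms by linarith
  have "(\<lambda>k. K * (\<rho> / \<theta>) ^ k) \<longlonglongrightarrow> K * 0"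
    using assms by (intro tendsto_mult_left LIMSEQ_power_zero) auto
  then have "eventually (\<lambda>k. K * (\<rho> / \<theta>) ^ k < 1) sequentially"
    by (intro order_tendstoD(2)) auto
  then obtain k1 where k1: "\<And>k. k \<ge> k1 \<Longrightarrow> K * (\<rho> / \<theta>) ^ k < 1"
    unfolding eventually_sequentially by blast
  have "0 < Suc k1" "K * (\<rho> / \<theta>) ^ Suc k1 \<le> 1"
    using k1[of "Suc k1"] by auto
  then show ?thesis
    using lyapunov_norm_equivalent[OF assms(1,2) \<open>0 < \<theta>\<close> _ decay]
      lyapunov_norm_contraction[OF \<open>0 < \<theta>\<close> decay] by blast
qed

lemma adapted_norm_if_spectral_radius_less:
  fixes A :: "real^'n^'n::finite"
  assumes "Defs.spectral_radius A < \<theta>"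
  shows "\<exists>N C. norm_equivalent N C \<and> (\<forall>v. N (A *v v) \<le> \<theta> * N v)"
proof -
  define \<rho> where "\<rho> = (Defs.spectral_radius A + \<theta>) / 2"
  have \<rho>: "Defs.spectral_radius A < \<rho>" "0 \<le> \<rho>" "\<rho> < \<theta>"
    using assms spectral_radius_nonneg[of A] by (auto simp: \<rho>_def)
  then obtain K where K: "\<And>k x. norm (((*v) A ^^ k) x) \<le> K * \<rho> ^ k * norm x"
    using power_decay_if_spectral_radius_less by blast
  have "linear ((*v) A)" by simp
  from adapted_norm_exists[OF this \<rho>(2,3) K] show ?thesis .
qed

section \<open>Uniform contraction near a stable fixed point\<close>

lemma Dx_mult_vec:
  assumes "(f has_derivative D) (at (x, lam))"
  shows "Dx f x lam *v h = D (h, 0)"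
proof -
  have "(THE D. (f has_derivative D) (at (x, lam))) = D"
  proof (rule the_equality)
    show "D' = D" if "(f has_derivative D') (at (x, lam))" for D'
      using that assms by (rule has_derivative_unique)
  qed (fact assms)
  moreover have "bounded_linear (\<lambda>h. D (h, 0))"
    using has_derivative_bounded_linear[OF assms]
    by (rule bounded_linear_compose) (intro bounded_linear_Pair bounded_linear_ident bounded_linear_zero)
  ultimately show ?thesis
    unfolding Dx_def using fun_cong[OF matrix_vector_mul(3)] by simp
qed

lemma dist_Pair_less:
  assumes "dist x x0 < \<delta> / 2" "dist y y0 < \<delta> / 2"
  shows "dist (x, y) (x0, y0) < \<delta>"
proof -
  have "dist (x, y) (x0, y0) \<le> dist x x0 + dist y y0"
    unfolding dist_Pair_Pair by (rule sqrt_sum_squares_le_sum) auto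
  with assms show ?thesis by linarith
qed

lemma linearization_error_near:
  fixes f :: "'a::real_normed_vector \<times> 'b::real_normed_vector \<Rightarrow> 'c::real_normed_vector"
  assumes der: "\<And>z. (f has_derivative blinfun_apply (f' z)) (at z)"
    and close: "\<And>z. dist z (x0, lam0) < \<delta> \<Longrightarrow> norm (f' z - f' (x0, lam0)) \<le> \<eta>"
    and near: "dist lam lam0 < \<delta> / 2" "dist x x0 < \<delta> / 2" "dist y x0 < \<delta> / 2"
  shows "norm (f (x, lam) - f (y, lam) - f' (x0, lam0) (x - y, 0)) \<le> \<eta> * norm (x - y)"
proof -
  let ?S = "ball (x0, lam0) \<delta>"
  have "(y, lam) \<in> ?S" "(x, lam) \<in> ?S"
    using near by (auto simp: dist_commute intro!: dist_Pair_less)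
  then have segment: "(y, lam) + t *\<^sub>R ((x, lam) - (y, lam)) \<in> ?S" if "t \<in> {0..1}" for t
  proof (rule closed_segment_subset[OF _ _ convex_ball, THEN subsetD])
    show "(y, lam) + t *\<^sub>R ((x, lam) - (y, lam)) \<in> closed_segment (y, lam) (x, lam)"
      using that by (auto simp: in_segment algebra_simps intro!: exI[of _ t])
  qed
  have derivative: "(f has_derivative blinfun_apply (f' z)) (at z within ?S)" for z
    using der by (rule has_derivative_at_withinI)
  have onorm_close: "onorm (blinfun_apply (f' z) - blinfun_apply (f' (x0, lam0))) \<le> \<eta>"
    if "z \<in> ?S" for z
  proof -
    have "blinfun_apply (f' z) - blinfun_apply (f' (x0, lam0)) = blinfun_apply (f' z - f' (x0, lam0))"
      by (simp add: fun_eq_iff blinfun.diff_left)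
    with close[of z] that show ?thesis
      by (simp add: dist_commute norm_blinfun.rep_eq)
  qed
  have "0 < \<delta>"
    using near(1) zero_le_dist[of lam lam0] by linarith
  then have "norm (f (x, lam) - f (y, lam) - f' (x0, lam0) ((x, lam) - (y, lam)))
      \<le> norm ((x, lam) - (y, lam)) * \<eta>"
    by (intro differentiable_bound_linearization[OF segment derivative onorm_close]) auto
  then show ?thesis
    by (simp add: mult.commute)
qed

lemma C1_map_locally_uniform_contraction:
  fixes f :: "(real^'l) \<times> (real^'m) \<Rightarrow> real^'l"
  assumes "C1_map f" "Defs.spectral_radius (Dx f x0 lam0) < 1"
  shows "\<exists>N C q \<delta>. norm_equivalent N C \<and> 0 \<le> q \<and> q < 1 \<and> 0 < \<delta> \<and>
     (\<forall>lam x y. dist lam lam0 < \<delta> \<longrightarrow> dist x x0 < \<delta> \<longrightarrow> dist y x0 < \<delta> \<longrightarrow>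
        N (f (x, lam) - f (y, lam)) \<le> q * N (x - y))"
proof -
  obtain f' where der: "\<And>z. (f has_derivative blinfun_apply (f' z)) (at z)"
    and "continuous_on UNIV f'"
    using assms(1) unfolding C1_map_def by blast
  then have "isCont f' (x0, lam0)"
    by (simp add: continuous_on_eq_continuous_at)
  define A where "A = Dx f x0 lam0"
  have A: "A *v h = f' (x0, lam0) (h, 0)" for h
    unfolding A_def by (rule Dx_mult_vec[OF der])
  define \<theta> where "\<theta> = (1 + Defs.spectral_radius A) / 2"
  have \<theta>: "Defs.spectral_radius A < \<theta>" "0 \<le> \<theta>" "\<theta> < 1"
    using assms(2) spectral_radius_nonneg[of A] by (auto simp: \<theta>_def A_def)
  then obtain N C where "norm_equivalent N C" and NA: "\<And>v. N (A *v v) \<le> \<theta> * N v"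
    using adapted_norm_if_spectral_radius_less[OF \<theta>(1)] by blast
  interpret norm_equivalent N C by fact
  define q where "q = (1 + \<theta>) / 2"
  define \<eta> where "\<eta> = (q - \<theta>) / C"
  have q: "0 \<le> q" "q < 1" and \<eta>: "0 < \<eta>" "\<theta> + C * \<eta> = q"
    using \<theta> C_pos by (auto simp: q_def \<eta>_def field_simps)
  obtain \<delta> where "0 < \<delta>" and \<delta>: "\<And>z. dist z (x0, lam0) < \<delta> \<Longrightarrow> dist (f' z) (f' (x0, lam0)) < \<eta>"
    using \<open>isCont f' (x0, lam0)\<close> \<eta>(1) unfolding continuous_at_eps_delta by blast
  have "N (f (x, lam) - f (y, lam)) \<le> q * N (x - y)"
    if "dist lam lam0 < \<delta> / 2" "dist x x0 < \<delta> / 2" "dist y x0 < \<delta> / 2" for lam x y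
  proof -
    have "norm (f (x, lam) - f (y, lam) - A *v (x - y)) \<le> \<eta> * norm (x - y)"
      unfolding A using \<delta> that
      by (intro linearization_error_near[OF der]) (auto simp: dist_norm less_imp_le)
    from perturbed_bound[OF NA this less_imp_le[OF \<eta>(1)]] show ?thesis
      unfolding \<eta>(2) .
  qed
  with \<open>0 < \<delta>\<close> q \<open>norm_equivalent N C\<close> show ?thesis
    by (intro exI[of _ N] exI[of _ C] exI[of _ q] exI[of _ "\<delta> / 2"]) auto
qed

section \<open>Nonautonomous contractions in the past\<close>

fun evolve :: "(int \<Rightarrow> 'a \<Rightarrow> 'a) \<Rightarrow> int \<Rightarrow> nat \<Rightarrow> 'a \<Rightarrow> 'a" where
  "evolve g s 0 u = u"
| "evolve g s (Suc k) u = g (s + int k) (evolve g s k u)"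

lemma evolve_Suc_shift: "evolve g s (Suc k) u = evolve g (s + 1) k (g s u)"
  by (induction k) (simp_all add: algebra_simps)

lemma orbits_eq_if_eq_upto:
  fixes x y :: "int \<Rightarrow> 'a"
  assumes x: "\<And>n. x (n + 1) = g n (x n)" and y: "\<And>n. y (n + 1) = g n (y n)"
    and eq: "\<And>n. n \<le> m \<Longrightarrow> x n = y n"
  shows "x = y"
proof
  have forward: "x (m + int k) = y (m + int k)" for k
  proof (induction k)
    case (Suc k)
    have step: "m + int (Suc k) = (m + int k) + 1" by simp
    show ?case
      unfolding step using x[of "m + int k"] y[of "m + int k"] Suc by simp
  qed (simp add: eq)
  show "x n = y n" for n
  proof (cases "n \<le> m")
    case False
    then have "n = m + int (nat (n - m))" by simp
    then show ?thesis using forward by metis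
  qed (rule eq)
qed

lemma orbit_extend_forward:
  fixes y :: "int \<Rightarrow> 'a"
  assumes "\<And>n. n < m \<Longrightarrow> y (n + 1) = g n (y n)"
  shows "\<exists>x. (\<forall>n. x (n + 1) = g n (x n)) \<and> (\<forall>n \<le> m. x n = y n)"
proof -
  define x where "x n = (if n \<le> m then y n else evolve g m (nat (n - m)) (y m))" for n
  have "x (n + 1) = g n (x n)" for n
  proof (cases "n < m")
    case False
    then have "nat (n + 1 - m) = Suc (nat (n - m))" by simp
    with False show ?thesis by (auto simp: x_def)
  qed (use assms in \<open>simp add: x_def\<close>)
  then show ?thesis by (intro exI[of _ x]) (simp add: x_def)
qed

lemma convergent_if_geometric_steps:
  fixes z :: "nat \<Rightarrow> 'a::banach"
  assumes "\<And>k. norm (z (Suc k) - z k) \<le> c * q ^ k" "0 \<le> q" "q < 1"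
  shows "convergent z"
proof -
  have "summable (\<lambda>k. z (Suc k) - z k)"
    by (rule summable_comparison_test[OF _ summable_mult[OF summable_geometric]]) (use assms in auto)
  then have "convergent (\<lambda>n. z 0 + (\<Sum>k<n. z (Suc k) - z k))"
    by (simp add: summable_iff_convergent convergent_add_const_iff)
  then show ?thesis by (simp add: sum_lessThan_telescope)
qed

locale backward_contraction = norm_equivalent N C
  for N :: "'a::banach \<Rightarrow> real" and C +
  fixes g :: "int \<Rightarrow> 'a \<Rightarrow> 'a" and n0 :: int and E :: "'a set" and q :: real
  assumes q_nonneg: "0 \<le> q" and q_less_1: "q < 1"
    and contraction: "\<And>n u v. n < n0 \<Longrightarrow> u \<in> E \<Longrightarrow> v \<in> E \<Longrightarrow> N (g n u - g n v) \<le> q * N (u - v)"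
begin

lemma lipschitz_on_E: "n < n0 \<Longrightarrow> (q * C)-lipschitz_on E (g n)"
proof (rule lipschitz_onI)
  fix u v assume "n < n0" "u \<in> E" "v \<in> E"
  have "norm (g n u - g n v) \<le> N (g n u - g n v)"
    by (rule norm_le)
  also have "\<dots> \<le> q * N (u - v)"
    by (rule contraction) fact+
  also have "\<dots> \<le> q * (C * norm (u - v))"
    using le_norm q_nonneg by (rule mult_left_mono)
  finally show "dist (g n u) (g n v) \<le> q * C * dist u v"
    by (simp add: dist_norm mult.assoc)
qed (use q_nonneg C_pos in simp)

lemma bounded_imp_N_diameter_bounded:
  assumes "bounded E"
  shows "\<exists>D. \<forall>u \<in> E. \<forall>v \<in> E. N (u - v) \<le> D"
proof -
  obtain R where R: "\<And>u. u \<in> E \<Longrightarrow> norm u \<le> R"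
    using assms bounded_any_center[of E 0] by auto
  have "N (u - v) \<le> C * (2 * R)" if "u \<in> E" "v \<in> E" for u v
  proof -
    have "norm (u - v) \<le> 2 * R"
      using norm_triangle_ineq4[of u v] R[OF that(1)] R[OF that(2)] by linarith
    then have "C * norm (u - v) \<le> C * (2 * R)"
      by (rule mult_left_mono) (use C_pos in simp)
    with le_norm[of "u - v"] show ?thesis by linarith
  qed
  then show ?thesis by blast
qed

lemma orbits_converge_backward:
  assumes x: "\<And>n. x (n + 1) = g n (x n)" "\<And>n. n \<le> n0 \<Longrightarrow> x n \<in> E"
    and y: "\<And>n. y (n + 1) = g n (y n)" "\<And>n. n \<le> n0 \<Longrightarrow> y n \<in> E"
    and "m \<le> n0"
  shows "N (x m - y m) \<le> q ^ k * N (x (m - int k) - y (m - int k))"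
proof (induction k)
  case (Suc k)
  let ?n = "m - int k - 1"
  have "?n < n0" "?n + 1 = m - int k" using \<open>m \<le> n0\<close> by auto
  then have "N (x (m - int k) - y (m - int k)) = N (g ?n (x ?n) - g ?n (y ?n))"
    using x(1)[of ?n] y(1)[of ?n] by simp
  also have "\<dots> \<le> q * N (x ?n - y ?n)"
    using \<open>?n < n0\<close> by (intro contraction x(2) y(2)) simp_all
  finally have step: "N (x (m - int k) - y (m - int k)) \<le> q * N (x ?n - y ?n)" .
  have "q ^ k * N (x (m - int k) - y (m - int k)) \<le> q ^ Suc k * N (x ?n - y ?n)"
    using mult_left_mono[OF step zero_le_power[OF q_nonneg, of k]] by (simp add: mult_ac)
  with Suc.IH show ?case by (simp add: algebra_simps)
qed simp

lemma orbits_unique: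
  assumes "bounded E"
    and x: "\<And>n. x (n + 1) = g n (x n)" "\<And>n. n \<le> n0 \<Longrightarrow> x n \<in> E"
    and y: "\<And>n. y (n + 1) = g n (y n)" "\<And>n. n \<le> n0 \<Longrightarrow> y n \<in> E"
  shows "x = y"
proof (rule orbits_eq_if_eq_upto[where g = g and m = n0, OF x(1) y(1)])
  obtain D where D: "\<And>u v. u \<in> E \<Longrightarrow> v \<in> E \<Longrightarrow> N (u - v) \<le> D"
    using bounded_imp_N_diameter_bounded[OF assms(1)] by blast
  fix m assume "m \<le> n0"
  have bound: "N (x m - y m) \<le> q ^ k * D" for k
  proof -
    have "N (x (m - int k) - y (m - int k)) \<le> D"
      using \<open>m \<le> n0\<close> by (intro D x(2) y(2)) simp_all
    then have "q ^ k * N (x (m - int k) - y (m - int k)) \<le> q ^ k * D"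
      by (rule mult_left_mono) (simp add: q_nonneg)
    with orbits_converge_backward[OF x y \<open>m \<le> n0\<close>] show ?thesis
      by (rule order_trans)
  qed
  have "(\<lambda>k. q ^ k * D) \<longlonglongrightarrow> 0"
    by (rule tendsto_mult_left_zero[OF LIMSEQ_power_zero]) (use q_nonneg q_less_1 in simp)
  then have "N (x m - y m) \<le> 0"
    by (rule LIMSEQ_le_const) (use bound in simp)
  then have "N (x m - y m) = 0"
    using nonneg by (intro antisym)
  then show "x m = y m"
    using eq_0_iff by simp
qed

definition pullback :: "'a \<Rightarrow> int \<Rightarrow> 'a" where
  "pullback p m = lim (\<lambda>k. evolve g (m - int k) k p)"

context
  fixes p :: 'a and \<rho> :: real
  assumes cball_subset: "cball_N p \<rho> \<subseteq> E"
    and small_defect: "\<And>n. n < n0 \<Longrightarrow> N (g n p - p) \<le> (1 - q) * \<rho>"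
begin

lemma center_mem: "p \<in> cball_N p \<rho>"
proof -
  have "0 \<le> (1 - q) * \<rho>"
    using small_defect[of "n0 - 1"] nonneg[of "g (n0 - 1) p - p"] by linarith
  then have "0 \<le> \<rho>"
    using q_less_1 by (simp add: zero_le_mult_iff)
  then show ?thesis
    using eq_0_iff[of 0] by (simp add: cball_N_def)
qed

lemma maps_into_cball:
  assumes "n < n0" "u \<in> cball_N p \<rho>"
  shows "g n u \<in> cball_N p \<rho>"
proof -
  have "N (g n u - g n p) \<le> q * N (u - p)"
    using assms center_mem cball_subset by (intro contraction) auto
  also have "\<dots> \<le> q * \<rho>"
    using assms(2) q_nonneg by (intro mult_left_mono) (auto simp: cball_N_def)
  finally have "N (g n u - g n p) + N (g n p - p) \<le> q * \<rho> + (1 - q) * \<rho>"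
    using small_defect[OF assms(1)] by linarith
  then show ?thesis
    using triangle_diff[of "g n u" p "g n p"] by (simp add: cball_N_def algebra_simps)
qed

lemma evolve_mem: "s + int k \<le> n0 \<Longrightarrow> u \<in> cball_N p \<rho> \<Longrightarrow> evolve g s k u \<in> cball_N p \<rho>"
  by (induction k) (auto intro: maps_into_cball)

lemma evolve_contraction:
  assumes "s + int k \<le> n0" "u \<in> cball_N p \<rho>" "v \<in> cball_N p \<rho>"
  shows "N (evolve g s k u - evolve g s k v) \<le> q ^ k * N (u - v)"
  using assms
proof (induction k)
  case (Suc k)
  then have "N (evolve g s (Suc k) u - evolve g s (Suc k) v)
      \<le> q * N (evolve g s k u - evolve g s k v)"
    by (auto intro!: contraction cball_subset[THEN subsetD] evolve_mem)
  also have "\<dots> \<le> q * (q ^ k * N (u - v))"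
    using Suc q_nonneg by (intro mult_left_mono) auto
  finally show ?case by simp
qed simp

lemma pullback_step:
  assumes "m \<le> n0"
  shows "norm (evolve g (m - int (Suc k)) (Suc k) p - evolve g (m - int k) k p)
    \<le> (1 - q) * \<rho> * q ^ k"
proof -
  let ?s = "m - int k"
  have shift: "evolve g (m - int (Suc k)) (Suc k) p = evolve g ?s k (g (?s - 1) p)"
    using evolve_Suc_shift[of g "m - int (Suc k)" k p] by (simp add: algebra_simps)
  have "g (?s - 1) p \<in> cball_N p \<rho>"
    using assms by (intro maps_into_cball center_mem) auto
  then have "N (evolve g ?s k (g (?s - 1) p) - evolve g ?s k p) \<le> q ^ k * N (g (?s - 1) p - p)"
    using assms by (intro evolve_contraction center_mem) auto
  also have "\<dots> \<le> (1 - q) * \<rho> * q ^ k"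
    using mult_left_mono[OF small_defect zero_le_power[OF q_nonneg]] assms
    by (simp add: mult.commute)
  finally show ?thesis
    unfolding shift by (rule order_trans[OF norm_le])
qed

lemma pullback_tendsto:
  assumes "m \<le> n0"
  shows "(\<lambda>k. evolve g (m - int k) k p) \<longlonglongrightarrow> pullback p m"
  unfolding pullback_def convergent_LIMSEQ_iff[symmetric]
  using pullback_step[OF assms] q_nonneg q_less_1 by (rule convergent_if_geometric_steps)

lemma pullback_iterates_mem: "m \<le> n0 \<Longrightarrow> evolve g (m - int k) k p \<in> cball_N p \<rho>"
  by (intro evolve_mem center_mem) simp

lemma pullback_mem: "m \<le> n0 \<Longrightarrow> pullback p m \<in> cball_N p \<rho>"
  using closed_cball_N pullback_iterates_mem pullback_tendsto by (rule closed_sequentially)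

lemma pullback_step_forward:
  assumes "m < n0"
  shows "pullback p (m + 1) = g m (pullback p m)"
proof (rule LIMSEQ_unique)
  have "(\<lambda>k. evolve g (m + 1 - int (Suc k)) (Suc k) p) \<longlonglongrightarrow> pullback p (m + 1)"
    using pullback_tendsto[of "m + 1"] assms by (intro LIMSEQ_Suc) simp
  moreover have "m + 1 - int (Suc k) = m - int k" for k by simp
  ultimately show "(\<lambda>k. g m (evolve g (m - int k) k p)) \<longlonglongrightarrow> pullback p (m + 1)"
    by simp
  show "(\<lambda>k. g m (evolve g (m - int k) k p)) \<longlonglongrightarrow> g m (pullback p m)"
    using lipschitz_on_continuous_on[OF lipschitz_on_E[OF assms]]
  proof (rule continuous_on_tendsto_compose)
    show "(\<lambda>k. evolve g (m - int k) k p) \<longlonglongrightarrow> pullback p m"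
      using assms by (intro pullback_tendsto) simp
    show "pullback p m \<in> E"
      using assms pullback_mem cball_subset by auto
    show "\<forall>\<^sub>F k in sequentially. evolve g (m - int k) k p \<in> E"
      using assms pullback_iterates_mem[of m] cball_subset by (intro always_eventually) auto
  qed
qed

lemma orbit_exists: "\<exists>x. (\<forall>n. x (n + 1) = g n (x n)) \<and> (\<forall>n \<le> n0. x n \<in> cball_N p \<rho>)"
proof -
  obtain x where "\<forall>n. x (n + 1) = g n (x n)" "\<forall>n \<le> n0. x n = pullback p n"
    using orbit_extend_forward[of n0 "pullback p" g] pullback_step_forward by auto
  with pullback_mem show ?thesis by auto
qed

end

theorem unique_orbit:
  assumes "bounded E" "cball_N p \<rho> \<subseteq> E" "\<And>n. n < n0 \<Longrightarrow> N (g n p - p) \<le> (1 - q) * \<rho>"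
  shows "\<exists>!x. (\<forall>n. x (n + 1) = g n (x n)) \<and> (\<forall>n \<le> n0. x n \<in> E)"
proof -
  obtain x where x: "\<forall>n. x (n + 1) = g n (x n)" "\<forall>n \<le> n0. x n \<in> cball_N p \<rho>"
    using orbit_exists[OF assms(2,3)] by blast
  show ?thesis
  proof (rule ex1I[of _ x])
    show "(\<forall>n. x (n + 1) = g n (x n)) \<and> (\<forall>n \<le> n0. x n \<in> E)"
      using x assms(2) by blast
    show "y = x" if "(\<forall>n. y (n + 1) = g n (y n)) \<and> (\<forall>n \<le> n0. y n \<in> E)" for y
      using that x assms(2) by (intro orbits_unique[OF assms(1)]) auto
  qed
qed

end

section \<open>Solutions near the left endpoint\<close>

lemma unique_solution_if_past_parameters_close:
  fixes f :: "(real^'l) \<times> (real^'m) \<Rightarrow> real^'l" and Lam :: "real \<Rightarrow> real^'m"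
  assumes "norm_equivalent \<nu> C" "0 \<le> q" "q < 1"
    and contraction: "\<And>lam x y. dist lam lm < \<delta> \<Longrightarrow> dist x Xm < \<delta> \<Longrightarrow> dist y Xm < \<delta> \<Longrightarrow>
        \<nu> (f (x, lam) - f (y, lam)) \<le> q * \<nu> (x - y)"
    and "0 < \<epsilon>" "\<epsilon> \<le> \<delta>"
    and close: "\<And>n. n < n0 \<Longrightarrow>
        dist (Lam (r * of_int n)) lm < \<delta> \<and> \<nu> (f (Xm, Lam (r * of_int n)) - Xm) \<le> (1 - q) * (\<epsilon> / 2)"
  shows "\<exists>!x. is_solution f Lam r x \<and> (\<forall>n. n \<le> n0 \<longrightarrow> dist (x n) Xm < \<epsilon>)"
proof -
  define g where "g n u = f (u, Lam (r * of_int n))" for n u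
  have "backward_contraction \<nu> C g n0 (ball Xm \<epsilon>) q"
  proof (intro backward_contraction.intro backward_contraction_axioms.intro)
    show "\<nu> (g n u - g n v) \<le> q * \<nu> (u - v)" if "n < n0" "u \<in> ball Xm \<epsilon>" "v \<in> ball Xm \<epsilon>" for n u v
      using close[OF that(1)] that(2,3) \<open>\<epsilon> \<le> \<delta>\<close> unfolding g_def
      by (intro contraction) (auto simp: dist_commute)
  qed fact+
  then interpret backward_contraction \<nu> C g n0 "ball Xm \<epsilon>" q .
  have "\<exists>!x. (\<forall>n. x (n + 1) = g n (x n)) \<and> (\<forall>n \<le> n0. x n \<in> ball Xm \<epsilon>)"
  proof (rule unique_orbit)
    show "cball_N Xm (\<epsilon> / 2) \<subseteq> ball Xm \<epsilon>"
      using \<open>0 < \<epsilon>\<close> by (intro cball_N_subset_ball) simp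
    show "\<nu> (g n Xm - Xm) \<le> (1 - q) * (\<epsilon> / 2)" if "n < n0" for n
      using close[OF that] by (simp add: g_def)
  qed simp
  then show ?thesis
    by (simp add: is_solution_def g_def dist_commute)
qed

lemma eventually_near_endpoint_at_bot:
  fixes f :: "'a::euclidean_space \<times> 'b::euclidean_space \<Rightarrow> 'a" and Lam :: "real \<Rightarrow> 'b"
  assumes "C1_map f" "(Lam \<longlongrightarrow> lm) at_bot" "f (Xm, lm) = Xm" "0 < \<delta>" "0 < e"
  shows "\<exists>T. \<forall>s \<le> T. dist (Lam s) lm < \<delta> \<and> norm (f (Xm, Lam s) - Xm) < e"
proof -
  have "isCont f z" for z
    using assms(1) has_derivative_continuous unfolding C1_map_def by blast
  then have "((\<lambda>s. f (Xm, Lam s)) \<longlongrightarrow> Xm) at_bot"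
    using isCont_tendsto_compose[OF _ tendsto_Pair[OF tendsto_const assms(2)]] assms(3) by metis
  then have "eventually (\<lambda>s. dist (Lam s) lm < \<delta> \<and> dist (f (Xm, Lam s)) Xm < e) at_bot"
    using assms(2,4,5) by (intro eventually_conj tendstoD)
  then show ?thesis
    by (simp add: eventually_at_bot_linorder dist_norm)
qed

lemma unique_solution_near_endpoint:
  fixes f :: "(real^'l) \<times> (real^'m) \<Rightarrow> real^'l" and Lam :: "real \<Rightarrow> real^'m"
  assumes "C1_map f" "(Lam \<longlongrightarrow> lm) at_bot" "f (Xm, lm) = Xm"
    and \<nu>: "norm_equivalent \<nu> C" and q: "0 \<le> q" "q < 1"
    and contraction: "\<And>lam x y. dist lam lm < \<delta> \<Longrightarrow> dist x Xm < \<delta> \<Longrightarrow> dist y Xm < \<delta> \<Longrightarrow>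
        \<nu> (f (x, lam) - f (y, lam)) \<le> q * \<nu> (x - y)"
    and \<epsilon>: "0 < \<epsilon>" "\<epsilon> < \<delta>"
  shows "\<exists>S>0. \<forall>(r::real) (N::nat). r > 0 \<and> N > 0 \<and> r * real N > S \<longrightarrow>
           (\<exists>!x. is_solution f Lam r x \<and> (\<forall>n::int. n \<le> - int N \<longrightarrow> dist (x n) Xm < \<epsilon>))"
proof -
  interpret norm_equivalent \<nu> C by (fact \<nu>)
  have "0 < \<delta>" "0 < (1 - q) * (\<epsilon> / 2) / C"
    using \<epsilon> q C_pos by auto
  then obtain T where T: "\<And>s. s \<le> T \<Longrightarrow>
      dist (Lam s) lm < \<delta> \<and> norm (f (Xm, Lam s) - Xm) < (1 - q) * (\<epsilon> / 2) / C"
    using eventually_near_endpoint_at_bot[OF assms(1-3)] by blast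
  show ?thesis
  proof (rule exI[of _ "max 1 (- T)"], intro conjI allI impI)
    fix r :: real and M :: nat assume rM: "0 < r \<and> 0 < M \<and> max 1 (- T) < r * real M"
    show "\<exists>!x. is_solution f Lam r x \<and> (\<forall>n. n \<le> - int M \<longrightarrow> dist (x n) Xm < \<epsilon>)"
    proof (rule unique_solution_if_past_parameters_close[OF \<nu> q contraction])
      fix n :: int assume "n < - int M"
      then have "r * of_int n \<le> r * (- real M)"
        using rM by (intro mult_left_mono) auto
      with rM have "r * of_int n \<le> T" by linarith
      then have "dist (Lam (r * of_int n)) lm < \<delta>"
        and "norm (f (Xm, Lam (r * of_int n)) - Xm) < (1 - q) * (\<epsilon> / 2) / C"
        using T by blast+
      moreover from this(2) have "norm (f (Xm, Lam (r * of_int n)) - Xm) * C < (1 - q) * (\<epsilon> / 2)"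
        by (simp only: pos_less_divide_eq[OF C_pos])
      ultimately show "dist (Lam (r * of_int n)) lm < \<delta> \<and>
          \<nu> (f (Xm, Lam (r * of_int n)) - Xm) \<le> (1 - q) * (\<epsilon> / 2)"
        using le_norm[of "f (Xm, Lam (r * of_int n)) - Xm", unfolded mult.commute[of C]] by simp
    qed (use \<epsilon> in auto)
  qed simp
qed

theorem mainTheorem8:
  fixes f :: "(real^'l) \<times> (real^'m) \<Rightarrow> real^'l"
    and Lam :: "real \<Rightarrow> real^'m" and lm lp :: "real^'m"
    and X :: "real \<Rightarrow> real^'l" and Xm Xp :: "real^'l"
  assumes "C1_map f"
    and "parameter_shift Lam lm lp"
    and "stable_path f Lam lm lp X Xm Xp"
  shows "\<exists>\<epsilon>0>0. \<forall>\<epsilon>. 0 < \<epsilon> \<and> \<epsilon> < \<epsilon>0 \<longrightarrow>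
           (\<exists>S>0. \<forall>(r::real) (N::nat). r > 0 \<and> N > 0 \<and> r * real N > S \<longrightarrow>
              (\<exists>!x. is_solution f Lam r x \<and> (\<forall>n::int. n \<le> - int N \<longrightarrow> dist (x n) Xm < \<epsilon>)))"
proof -
  have fixed: "f (Xm, lm) = Xm" and stable: "Defs.spectral_radius (Dx f Xm lm) < 1"
    and Lam: "(Lam \<longlongrightarrow> lm) at_bot"
    using assms(2,3) by (auto simp: stable_path_def parameter_shift_def)
  obtain \<nu> C q \<delta> where \<nu>: "norm_equivalent \<nu> C" and q: "0 \<le> q" "q < 1" and "0 < \<delta>"
    and contraction: "\<And>lam x y. dist lam lm < \<delta> \<Longrightarrow> dist x Xm < \<delta> \<Longrightarrow> dist y Xm < \<delta> \<Longrightarrow>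
        \<nu> (f (x, lam) - f (y, lam)) \<le> q * \<nu> (x - y)"
    using C1_map_locally_uniform_contraction[OF assms(1) stable] by blast
  show ?thesis
    using \<open>0 < \<delta>\<close> unique_solution_near_endpoint[OF assms(1) Lam fixed \<nu> q contraction] by blast
qed

end
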